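(* Let $\{e_i\}_{i=1}^\infty$ be the canonical orthonormal basis of the real Hilbert space $\ell_2$, let $a_i\neq0$ be real numbers with $\sum_i a_i^2<\infty$, let $x_k=a_k(e_1+e_{k+1})$, let $L$ be the right shift $L(c_1,c_2,\dots)=(0,c_1,c_2,\dots)$, and let $\mathcal{X}=\{e_i\}_{i=1}^\infty\cup\{2^{-i}L^ix_k\}_{i=0,k=1}^{\infty,\infty}$ (an injective frame for $\ell_2$). Then for every $\epsilon>0$ there is a frame $\mathcal{Y}$ for $\ell_2$ (indexed by the same index set) such that $d(\mathcal{X},\mathcal{Y})<\epsilon$ and $\mathcal{Y}$ is not injective.
   Context: A family $\{y_k\}$ in $\ell_2$ is called injective if whenever a Hilbert–Schmidt self-adjoint operator $T$ on $\ell_2$ satisfies $\langle Ty_k,y_k\rangle=0$ for all $k$, then $T=0$. For frames $\mathcal{X}=\{x_k\}$ and $\mathcal{Y}=\{y_k\}$ indexed by the same set, $d^2(\mathcal{X},\mathcal{Y})=\sum_k\|x_k-y_k\|^2$ (possibly infinite). *)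

theory Defs
  imports "HOL-Analysis.Analysis"
begin

text \<open>The real Hilbert space l2, realised concretely as square-summable real sequences
  indexed by nat (index 0 corresponds to the paper's index 1).\<close>

definition l2 :: "(nat \<Rightarrow> real) set" where
  "l2 = {x. summable (\<lambda>n. (x n)\<^sup>2)}"

definition l2_inner :: "(nat \<Rightarrow> real) \<Rightarrow> (nat \<Rightarrow> real) \<Rightarrow> real" where
  "l2_inner x y = (\<Sum>n. x n * y n)"

definition l2_norm :: "(nat \<Rightarrow> real) \<Rightarrow> real" where
  "l2_norm x = sqrt (\<Sum>n. (x n)\<^sup>2)"

definition l2_basis :: "nat \<Rightarrow> nat \<Rightarrow> real" where
  "l2_basis i = (\<lambda>n. if n = i then 1 else 0)"

definition right_shift :: "(nat \<Rightarrow> real) \<Rightarrow> (nat \<Rightarrow> real)" where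
  "right_shift c = (\<lambda>n. case n of 0 \<Rightarrow> 0 | Suc m \<Rightarrow> c m)"

text \<open>A bounded linear operator on l2 (only its behaviour on l2 matters).\<close>
definition bounded_op_l2 :: "((nat \<Rightarrow> real) \<Rightarrow> (nat \<Rightarrow> real)) \<Rightarrow> bool" where
  "bounded_op_l2 T \<longleftrightarrow>
     (\<forall>x\<in>l2. T x \<in> l2) \<and>
     (\<forall>x\<in>l2. \<forall>y\<in>l2. T (\<lambda>n. x n + y n) = (\<lambda>n. T x n + T y n)) \<and>
     (\<forall>x\<in>l2. \<forall>c::real. T (\<lambda>n. c * x n) = (\<lambda>n. c * T x n)) \<and>
     (\<exists>C. \<forall>x\<in>l2. l2_norm (T x) \<le> C * l2_norm x)"

definition self_adjoint_l2 :: "((nat \<Rightarrow> real) \<Rightarrow> (nat \<Rightarrow> real)) \<Rightarrow> bool" where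
  "self_adjoint_l2 T \<longleftrightarrow> (\<forall>x\<in>l2. \<forall>y\<in>l2. l2_inner (T x) y = l2_inner x (T y))"

definition hilbert_schmidt_l2 :: "((nat \<Rightarrow> real) \<Rightarrow> (nat \<Rightarrow> real)) \<Rightarrow> bool" where
  "hilbert_schmidt_l2 T \<longleftrightarrow> bounded_op_l2 T \<and> summable (\<lambda>i. (l2_norm (T (l2_basis i)))\<^sup>2)"

definition injective_family :: "('i \<Rightarrow> (nat \<Rightarrow> real)) \<Rightarrow> bool" where
  "injective_family y \<longleftrightarrow>
     (\<forall>T. hilbert_schmidt_l2 T \<and> self_adjoint_l2 T \<and> (\<forall>k. l2_inner (T (y k)) (y k) = 0)
          \<longrightarrow> (\<forall>x\<in>l2. T x = (\<lambda>n. 0)))"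

definition frame_l2 :: "('i \<Rightarrow> (nat \<Rightarrow> real)) \<Rightarrow> bool" where
  "frame_l2 y \<longleftrightarrow> (\<forall>k. y k \<in> l2) \<and>
     (\<exists>A B. 0 < A \<and> 0 < B \<and>
        (\<forall>f\<in>l2. (\<lambda>k. (l2_inner f (y k))\<^sup>2) summable_on UNIV \<and>
                 A * (l2_norm f)\<^sup>2 \<le> (\<Sum>\<^sub>\<infinity>k. (l2_inner f (y k))\<^sup>2) \<and>
                 (\<Sum>\<^sub>\<infinity>k. (l2_inner f (y k))\<^sup>2) \<le> B * (l2_norm f)\<^sup>2))"

text \<open>d(X,Y) < eps, where d^2(X,Y) = sum_k ||x_k - y_k||^2 (possibly infinite):
  the sum must be finite and below eps^2.\<close>
definition frame_dist_less :: "('i \<Rightarrow> (nat \<Rightarrow> real)) \<Rightarrow> ('i \<Rightarrow> (nat \<Rightarrow> real)) \<Rightarrow> real \<Rightarrow> bool" where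
  "frame_dist_less X Y eps \<longleftrightarrow>
     (\<lambda>k. (l2_norm (\<lambda>n. X k n - Y k n))\<^sup>2) summable_on UNIV \<and>
     sqrt (\<Sum>\<^sub>\<infinity>k. (l2_norm (\<lambda>n. X k n - Y k n))\<^sup>2) < eps"

text \<open>The frame X of the theorem, indexed by nat + nat * nat:
  Inl i  ~ e_{i+1};  Inr (i,k) ~ 2^{-i} L^i x_{k+1}, with x_{k+1} = a_{k+1}(e_1 + e_{k+2}).\<close>
definition xvec :: "(nat \<Rightarrow> real) \<Rightarrow> nat \<Rightarrow> (nat \<Rightarrow> real)" where
  "xvec a k = (\<lambda>n. a k * (l2_basis 0 n + l2_basis (Suc k) n))"

definition frameX :: "(nat \<Rightarrow> real) \<Rightarrow> nat + nat \<times> nat \<Rightarrow> (nat \<Rightarrow> real)" where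
  "frameX a j = (case j of
       Inl i \<Rightarrow> l2_basis i
     | Inr (i, k) \<Rightarrow> (\<lambda>n. (1/2) ^ i * (right_shift ^^ i) (xvec a k) n))"

end

theory Submission
  imports Defs
begin

(* Delete from X the one vector 2^-N L^N x_1 = 2^-N a_1 (e_(N+1) + e_(N+2)); this moves X by
   sqrt 2 * 2^-N |a_1|, which is small for large N. The remaining family still contains the
   orthonormal basis and its other vectors have square-summable norms, so it is still a frame.
   But no remaining vector has nonzero entries in both coordinates N+1 and N+2, so the nonzero
   self-adjoint rank-two operator T exchanging e_(N+1) and e_(N+2), for which
   <T y, y> = 2 y_(N+1) y_(N+2), vanishes on the whole family: it is not injective. *)

lemma in_l2_if_finite_support:
  assumes "finite F" and "\<And>n. n \<notin> F \<Longrightarrow> x n = 0"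
  shows "x \<in> l2"
  unfolding l2_def using assms by (auto intro: summable_finite)

lemma l2_inner_finite_support:
  assumes "finite F" and "\<And>n. n \<notin> F \<Longrightarrow> y n = 0"
  shows "l2_inner x y = (\<Sum>n\<in>F. x n * y n)"
  unfolding l2_inner_def using assms by (intro suminf_finite) auto

lemma l2_inner_commute: "l2_inner x y = l2_inner y x"
  by (simp add: l2_inner_def mult.commute)

lemma l2_norm_eq_sqrt_inner: "l2_norm x = sqrt (l2_inner x x)"
  by (simp add: l2_norm_def l2_inner_def power2_eq_square)

lemma l2_norm_sq: "x \<in> l2 \<Longrightarrow> (l2_norm x)\<^sup>2 = (\<Sum>n. (x n)\<^sup>2)"
  unfolding l2_norm_def l2_def by (simp add: suminf_nonneg)

lemma l2_norm_nonneg: "x \<in> l2 \<Longrightarrow> 0 \<le> l2_norm x"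
  unfolding l2_norm_def l2_def by (simp add: suminf_nonneg)

lemma sum_sq_le_l2_norm_sq:
  "x \<in> l2 \<Longrightarrow> finite F \<Longrightarrow> (\<Sum>n\<in>F. (x n)\<^sup>2) \<le> (l2_norm x)\<^sup>2"
  by (simp add: l2_norm_sq sum_le_suminf l2_def)

lemma l2_basis_in_l2: "l2_basis i \<in> l2"
  by (rule in_l2_if_finite_support[of "{i}"]) (simp_all add: l2_basis_def)

lemma l2_inner_l2_basis: "l2_inner x (l2_basis i) = x i"
  by (subst l2_inner_finite_support[of "{i}"]) (simp_all add: l2_basis_def)

definition pair_vector :: "real \<Rightarrow> nat \<Rightarrow> nat \<Rightarrow> nat \<Rightarrow> real" where
  "pair_vector c p q = (\<lambda>n. c * (l2_basis p n + l2_basis q n))"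

lemma pair_vector_in_l2: "pair_vector c p q \<in> l2"
  by (rule in_l2_if_finite_support[of "{p, q}"]) (simp_all add: pair_vector_def l2_basis_def)

lemma l2_inner_pair_vector: "p \<noteq> q \<Longrightarrow> l2_inner x (pair_vector c p q) = c * (x p + x q)"
  by (subst l2_inner_finite_support[of "{p, q}"])
    (auto simp: pair_vector_def l2_basis_def algebra_simps)

lemma l2_norm_pair_vector:
  assumes "p \<noteq> q"
  shows "l2_norm (pair_vector c p q) = sqrt 2 * \<bar>c\<bar>"
proof -
  have "l2_inner (pair_vector c p q) (pair_vector c p q) = 2 * c\<^sup>2"
    using assms
    by (simp add: l2_inner_pair_vector) (simp add: pair_vector_def l2_basis_def power2_eq_square)
  then show ?thesis
    by (simp add: l2_norm_eq_sqrt_inner real_sqrt_mult)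
qed

lemma l2_inner_pair_vector_sq_le:
  assumes "x \<in> l2" and "p \<noteq> q"
  shows "(l2_inner x (pair_vector c p q))\<^sup>2 \<le> 2 * c\<^sup>2 * (l2_norm x)\<^sup>2"
proof -
  have "(x p + x q)\<^sup>2 \<le> 2 * ((x p)\<^sup>2 + (x q)\<^sup>2)"
    using sum_squares_ge_zero[of "x p - x q" 0] by (simp add: power2_eq_square algebra_simps)
  also have "\<dots> \<le> 2 * (l2_norm x)\<^sup>2"
    using sum_sq_le_l2_norm_sq[OF assms(1), of "{p, q}"] assms(2) by simp
  finally have "c\<^sup>2 * (x p + x q)\<^sup>2 \<le> c\<^sup>2 * (2 * (l2_norm x)\<^sup>2)"
    by (simp add: mult_left_mono)
  then show ?thesis
    using assms(2) by (simp add: l2_inner_pair_vector power_mult_distrib)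
qed

lemma funpow_right_shift: "(right_shift ^^ i) v n = (if i \<le> n then v (n - i) else 0)"
proof (induction i arbitrary: n)
  case 0
  then show ?case by simp
next
  case (Suc i)
  then show ?case by (cases n) (auto simp: right_shift_def)
qed

lemma frameX_Inl: "frameX a (Inl i) = l2_basis i"
  by (simp add: frameX_def)

lemma frameX_Inr: "frameX a (Inr (i, k)) = pair_vector ((1/2)^i * a k) i (Suc (i + k))"
  by (auto simp: frameX_def xvec_def pair_vector_def funpow_right_shift l2_basis_def fun_eq_iff)

lemma has_sum_Plus_UNIV:
  fixes g :: "'a + 'b \<Rightarrow> 'c::topological_comm_monoid_add"
  assumes "((g \<circ> Inl) has_sum s) UNIV" and "((g \<circ> Inr) has_sum t) UNIV"
  shows "(g has_sum (s + t)) UNIV"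
proof -
  have "(g has_sum (s + t)) (range Inl \<union> range Inr)"
    using assms by (intro has_sum_Un_disjoint) (auto simp: has_sum_reindex)
  moreover have "range Inl \<union> range Inr = (UNIV :: ('a + 'b) set)"
    using UNIV_Plus_UNIV by (simp add: Plus_def)
  ultimately show ?thesis
    by simp
qed

lemma frame_l2_if_basis_plus_square_summable:
  fixes Y :: "nat + 'j \<Rightarrow> nat \<Rightarrow> real" and w :: "'j \<Rightarrow> real"
  assumes in_l2: "\<And>k. Y k \<in> l2"
    and basis: "\<And>i. Y (Inl i) = l2_basis i"
    and bound: "\<And>j x. x \<in> l2 \<Longrightarrow> (l2_inner x (Y (Inr j)))\<^sup>2 \<le> w j * (l2_norm x)\<^sup>2"
    and w_nonneg: "\<And>j. 0 \<le> w j"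
    and w_summable: "w summable_on UNIV"
  shows "frame_l2 Y"
  unfolding frame_l2_def
proof (intro conjI allI in_l2, rule exI[of _ 1], rule exI[of _ "1 + infsum w UNIV"],
    intro conjI ballI)
  show "0 < 1 + infsum w UNIV"
    using w_nonneg by (simp add: infsum_nonneg add_pos_nonneg)
  fix x :: "nat \<Rightarrow> real"
  assume x: "x \<in> l2"
  define g where "g k = (l2_inner x (Y k))\<^sup>2" for k
  define R where "R = infsum (g \<circ> Inr) UNIV"
  have "g \<circ> Inl = (\<lambda>n. (x n)\<^sup>2)"
    by (simp add: fun_eq_iff g_def basis l2_inner_l2_basis)
  then have basis_sum: "((g \<circ> Inl) has_sum (l2_norm x)\<^sup>2) UNIV"
    using x by (simp add: sums_nonneg_imp_has_sum l2_norm_sq l2_def summable_sums)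
  have weights: "(\<lambda>j. w j * (l2_norm x)\<^sup>2) summable_on UNIV"
    using w_summable by (rule summable_on_cmult_left)
  have rest: "(g \<circ> Inr) summable_on UNIV"
    using weights by (rule summable_on_comparison_test) (simp_all add: g_def bound x)
  then have sum: "(g has_sum ((l2_norm x)\<^sup>2 + R)) UNIV"
    unfolding R_def using basis_sum by (intro has_sum_Plus_UNIV) simp_all
  have "0 \<le> R"
    unfolding R_def by (intro infsum_nonneg) (simp add: g_def)
  moreover have "R \<le> infsum w UNIV * (l2_norm x)\<^sup>2"
    unfolding R_def infsum_cmult_left[OF w_summable, symmetric]
    using rest weights by (intro infsum_mono) (simp_all add: g_def bound x)
  ultimately show "g summable_on UNIV"
    and "1 * (l2_norm x)\<^sup>2 \<le> infsum g UNIV"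
    and "infsum g UNIV \<le> (1 + infsum w UNIV) * (l2_norm x)\<^sup>2"
    using sum by (auto simp: infsumI has_sum_imp_summable algebra_simps)
qed simp

lemma summable_on_geometric_times_square:
  fixes a :: "nat \<Rightarrow> real"
  assumes "summable (\<lambda>k. (a k)\<^sup>2)"
  shows "(\<lambda>(i, k). ((1/2::real)^i * a k)\<^sup>2) summable_on UNIV"
proof -
  have quarter: "((1/2::real)^i)\<^sup>2 = (1/4)^i" for i :: nat
    by (simp add: power2_eq_square flip: power_mult_distrib)
  have "((\<lambda>k. ((1/2::real)^i * a k)\<^sup>2) has_sum ((1/4)^i * (\<Sum>k. (a k)\<^sup>2))) UNIV" for i
    using assms by (intro sums_nonneg_imp_has_sum)
      (simp_all add: power_mult_distrib quarter sums_mult summable_sums)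
  moreover have "(\<lambda>i. (1/4::real)^i * (\<Sum>k. (a k)\<^sup>2)) summable_on UNIV"
    by (intro summable_on_cmult_left summable_nonneg_imp_summable_on) simp_all
  ultimately show ?thesis
    using summable_on_SigmaI[where A = UNIV and B = "\<lambda>_. UNIV"
        and f = "\<lambda>(i, k). ((1/2::real)^i * a k)\<^sup>2"
        and g = "\<lambda>i. (1/4)^i * (\<Sum>k. (a k)\<^sup>2)"]
    by simp
qed

lemma frame_l2_frameX_fun_upd_zero:
  assumes "summable (\<lambda>k. (a k)\<^sup>2)"
  shows "frame_l2 ((frameX a)(Inr j := (\<lambda>n. 0)))"
proof (rule frame_l2_if_basis_plus_square_summable
    [where w = "\<lambda>(i, k). 2 * ((1/2)^i * a k)\<^sup>2"])
  have zero_in_l2: "(\<lambda>n. 0 :: real) \<in> l2"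
    by (rule in_l2_if_finite_support[of "{}"]) simp_all
  show "((frameX a)(Inr j := (\<lambda>n. 0))) k \<in> l2" for k
    by (cases k) (auto simp: zero_in_l2 frameX_Inl frameX_Inr l2_basis_in_l2 pair_vector_in_l2)
  show "((frameX a)(Inr j := (\<lambda>n. 0))) (Inl i) = l2_basis i" for i
    by (simp add: frameX_Inl)
  show "(l2_inner x (((frameX a)(Inr j := (\<lambda>n. 0))) (Inr ik)))\<^sup>2
      \<le> (case ik of (i, k) \<Rightarrow> 2 * ((1/2)^i * a k)\<^sup>2) * (l2_norm x)\<^sup>2"
    if "x \<in> l2" for x ik
    using that l2_inner_pair_vector_sq_le by (cases ik) (auto simp: frameX_Inr l2_inner_def)
  show "(\<lambda>(i, k). 2 * ((1/2::real)^i * a k)\<^sup>2) summable_on UNIV"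
    using summable_on_cmult_right[OF summable_on_geometric_times_square[OF assms], of 2]
    by (simp add: case_prod_beta')
qed (simp add: case_prod_beta)

lemma frame_dist_less_fun_upd_zero:
  assumes "X j \<in> l2"
  shows "frame_dist_less X (X(j := (\<lambda>n. 0))) eps \<longleftrightarrow> l2_norm (X j) < eps"
proof -
  have "((\<lambda>k. (l2_norm (\<lambda>n. X k n - (X(j := (\<lambda>n. 0))) k n))\<^sup>2)
      has_sum (l2_norm (X j))\<^sup>2) UNIV"
    by (rule has_sum_finite_neutralI[of "{j}"]) (auto simp: l2_norm_def)
  then show ?thesis
    unfolding frame_dist_less_def using l2_norm_nonneg[OF assms]
    by (auto simp: has_sum_imp_summable infsumI)
qed

definition swap_coords :: "nat \<Rightarrow> nat \<Rightarrow> (nat \<Rightarrow> real) \<Rightarrow> nat \<Rightarrow> real" where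
  "swap_coords p q x = (\<lambda>n. x q * l2_basis p n + x p * l2_basis q n)"

lemma l2_inner_swap_coords: "p \<noteq> q \<Longrightarrow> l2_inner (swap_coords p q x) y = x q * y p + x p * y q"
  by (subst l2_inner_commute, subst l2_inner_finite_support[of "{p, q}"])
    (auto simp: swap_coords_def l2_basis_def)

lemma hilbert_schmidt_swap_coords:
  assumes "p \<noteq> q"
  shows "hilbert_schmidt_l2 (swap_coords p q)"
  unfolding hilbert_schmidt_l2_def bounded_op_l2_def
proof (intro conjI ballI allI exI[of _ 1])
  show "swap_coords p q x \<in> l2" for x
    by (rule in_l2_if_finite_support[of "{p, q}"]) (auto simp: swap_coords_def l2_basis_def)
  show "l2_norm (swap_coords p q x) \<le> 1 * l2_norm x" if x: "x \<in> l2" for x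
  proof -
    have "l2_inner (swap_coords p q x) (swap_coords p q x) = (x p)\<^sup>2 + (x q)\<^sup>2"
      using assms by (simp add: l2_inner_swap_coords)
        (simp add: swap_coords_def l2_basis_def power2_eq_square)
    then have "l2_norm (swap_coords p q x) = sqrt ((x p)\<^sup>2 + (x q)\<^sup>2)"
      by (simp add: l2_norm_eq_sqrt_inner)
    also have "\<dots> \<le> l2_norm x"
      using sum_sq_le_l2_norm_sq[OF x, of "{p, q}"] assms
      by (intro real_le_lsqrt) (simp_all add: l2_norm_nonneg x)
    finally show ?thesis
      by simp
  qed
  have "swap_coords p q (l2_basis i) = (\<lambda>n. 0)" if "i \<notin> {p, q}" for i
    using that by (auto simp: swap_coords_def l2_basis_def)
  then show "summable (\<lambda>i. (l2_norm (swap_coords p q (l2_basis i)))\<^sup>2)"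
    by (intro summable_finite[of "{p, q}"]) (auto simp: l2_norm_def)
qed (auto simp: swap_coords_def algebra_simps)

lemma self_adjoint_swap_coords: "p \<noteq> q \<Longrightarrow> self_adjoint_l2 (swap_coords p q)"
  unfolding self_adjoint_l2_def
  by (metis l2_inner_commute l2_inner_swap_coords mult.commute add.commute)

lemma not_injective_family_if_coordinate_product_zero:
  assumes "p \<noteq> q" and "\<And>k. y k p * y k q = 0"
  shows "\<not> injective_family y"
proof
  assume "injective_family y"
  moreover have "l2_inner (swap_coords p q (y k)) (y k) = 0" for k
    using assms by (simp add: l2_inner_swap_coords mult.commute)
  ultimately have "swap_coords p q (l2_basis p) = (\<lambda>n. 0)"
    using assms(1) hilbert_schmidt_swap_coords self_adjoint_swap_coords l2_basis_in_l2
    unfolding injective_family_def by blast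
  then have "swap_coords p q (l2_basis p) q = 0"
    by simp
  with assms(1) show False
    by (simp add: swap_coords_def l2_basis_def)
qed

lemma not_injective_frameX_fun_upd_zero:
  "\<not> injective_family ((frameX a)(Inr (N, 0) := (\<lambda>n. 0)))"
proof (rule not_injective_family_if_coordinate_product_zero[of N "Suc N"])
  fix k
  show "((frameX a)(Inr (N, 0) := (\<lambda>n. 0))) k N
      * ((frameX a)(Inr (N, 0) := (\<lambda>n. 0))) k (Suc N) = 0"
    by (cases k) (auto simp: frameX_Inl frameX_Inr pair_vector_def l2_basis_def split: if_splits)
qed simp

theorem mainTheorem15:
  fixes a :: "nat \<Rightarrow> real" and eps :: real
  assumes "\<And>i. a i \<noteq> 0"
    and "summable (\<lambda>i. (a i)\<^sup>2)"
    and "0 < eps"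
  shows "\<exists>Y :: nat + nat \<times> nat \<Rightarrow> (nat \<Rightarrow> real).
           frame_l2 Y \<and> frame_dist_less (frameX a) Y eps \<and> \<not> injective_family Y"
proof -
  \<comment> \<open>The hypothesis a i \<noteq> 0 is what makes X itself injective.\<close>
  have "(\<lambda>N. sqrt 2 * \<bar>a 0\<bar> * (1/2::real)^N) \<longlonglongrightarrow> 0"
    by (intro tendsto_mult_right_zero LIMSEQ_power_zero) simp
  then have "\<forall>\<^sub>F N in sequentially. sqrt 2 * \<bar>a 0\<bar> * (1/2::real)^N < eps"
    using assms(3) by (rule order_tendstoD(2))
  then obtain N where small: "sqrt 2 * \<bar>a 0\<bar> * (1/2::real)^N < eps"
    unfolding eventually_sequentially by blast
  define Y where "Y = (frameX a)(Inr (N, 0) := (\<lambda>n. 0))"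
  have "l2_norm (frameX a (Inr (N, 0))) < eps"
    using small by (simp add: frameX_Inr l2_norm_pair_vector abs_mult mult_ac)
  then have "frame_dist_less (frameX a) Y eps"
    unfolding Y_def by (simp add: frame_dist_less_fun_upd_zero frameX_Inr pair_vector_in_l2)
  moreover have "frame_l2 Y"
    unfolding Y_def using assms(2) by (rule frame_l2_frameX_fun_upd_zero)
  moreover have "\<not> injective_family Y"
    unfolding Y_def by (rule not_injective_frameX_fun_upd_zero)
  ultimately show ?thesis
    by blast
qed

end
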